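(* Any sequential MTTKRP algorithm, executed in the two-level memory model with fast memory of size $M$, performs at least \[ \frac{1}{3^{2-1/N}}\,\frac{N I R}{M^{1-1/N}} - M \] loads and stores.
   Context: MTTKRP: Fix integers $N\ge 2$, $I_1,\dots,I_N\ge1$, $R\ge1$, and a mode $n\in[N]$; let $I=I_1I_2\cdots I_N$. Values come from an arbitrary nonempty set equipped with two binary operations written $+$ and $\cdot$ (no algebraic laws assumed). Inputs are an $N$-way tensor $\mathcal{X}$ of dimensions $I_1\times\cdots\times I_N$ and matrices $A^{(k)}$ of size $I_k\times R$ for $k\in[N]\setminus\{n\}$; the output is the $I_n\times R$ matrix $B^{(n)}$ with $B^{(n)}(i_n,r)=\sum \mathcal{X}(i_1,\dots,i_N)\prod_{k\ne n}A^{(k)}(i_k,r)$, the sum over all $(i_1,\dots,i_N)$ with $n$-th entry $i_n$. An MTTKRP algorithm must, for each point $(i_1,\dots,i_N,r)$ of the iteration space $[I_1]\times\cdots\times[I_N]\times[R]$ (of size $IR$), perform one atomic $N$-ary multiply of $\mathcal{X}(i_1,\dots,i_N)$ and the $A^{(k)}(i_k,r)$, $k\neq n$, and accumulate these products into $B^{(n)}(i_n,r)$ by binary additions. Sequential model: one processor, a fast memory holding at most $M$ values and an unbounded slow memory; arithmetic operands and results must reside in fast memory; communication consists of loads (copy a value from slow to fast memory) and stores (fast to slow); inputs start and outputs end in slow memory. *)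

theory Defs
  imports Complex_Main "HOL-Library.Multiset"
begin

text \<open>Symbolic values: since no algebraic laws hold, an algorithm that is correct for
every value set with two operations must compute the corresponding formal terms.
Indices are 0-based; the tensor has order N = length dims, modes 0..N-1.\<close>

datatype inp = XIn "nat list"
             | AIn nat nat nat           \<comment> \<open>AIn k i r = A^(k)(i,r)\<close>

datatype val = Inp inp | Mul "val list" | Add val val

datatype instr = Load val | Store val | Discard val
               | MulOp "val list" | AddOp val val

definition valid_idx :: "nat list \<Rightarrow> nat list \<Rightarrow> bool" where
  "valid_idx dims idx \<longleftrightarrow> length idx = length dims \<and> (\<forall>k<length dims. idx ! k < dims ! k)"

definition inputs :: "nat list \<Rightarrow> nat \<Rightarrow> nat \<Rightarrow> val set" where
  "inputs dims n R =
     {Inp (XIn idx) | idx. valid_idx dims idx} \<union>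
     {Inp (AIn k i r) | k i r. k < length dims \<and> k \<noteq> n \<and> i < dims ! k \<and> r < R}"

definition prod_args :: "nat list \<Rightarrow> nat \<Rightarrow> nat list \<Rightarrow> nat \<Rightarrow> val list" where
  "prod_args dims n idx r =
     Inp (XIn idx) # map (\<lambda>k. Inp (AIn k (idx ! k) r)) (filter (\<lambda>k. k \<noteq> n) [0..<length dims])"

definition products :: "nat list \<Rightarrow> nat \<Rightarrow> nat \<Rightarrow> nat \<Rightarrow> val set" where
  "products dims n i r = {Mul (prod_args dims n idx r) | idx. valid_idx dims idx \<and> idx ! n = i}"

fun leaves :: "val \<Rightarrow> val multiset" where
  "leaves (Add a b) = leaves a + leaves b"
| "leaves t = {#t#}"

text \<open>Two-level memory: state = (slow memory contents, fast memory contents);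
fast memory holds at most M values; operands and result of an arithmetic
operation must be in fast memory.\<close>
fun step :: "nat \<Rightarrow> instr \<Rightarrow> val set \<times> val set \<Rightarrow> (val set \<times> val set) option" where
  "step M (Load t) (S, F) =
     (if t \<in> S \<and> card (insert t F) \<le> M then Some (S, insert t F) else None)"
| "step M (Store t) (S, F) = (if t \<in> F then Some (insert t S, F) else None)"
| "step M (Discard t) (S, F) = Some (S, F - {t})"
| "step M (MulOp ts) (S, F) =
     (if set ts \<subseteq> F \<and> card (insert (Mul ts) F) \<le> M then Some (S, insert (Mul ts) F) else None)"
| "step M (AddOp a b) (S, F) =
     (if a \<in> F \<and> b \<in> F \<and> card (insert (Add a b) F) \<le> M then Some (S, insert (Add a b) F) else None)"

fun exec :: "nat \<Rightarrow> instr list \<Rightarrow> val set \<times> val set \<Rightarrow> (val set \<times> val set) option" where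
  "exec M [] s = Some s"
| "exec M (i # is) s = (case step M i s of None \<Rightarrow> None | Some s' \<Rightarrow> exec M is s')"

fun is_io :: "instr \<Rightarrow> bool" where
  "is_io (Load _) = True"
| "is_io (Store _) = True"
| "is_io _ = False"

definition io_count :: "instr list \<Rightarrow> nat" where
  "io_count prog = length (filter is_io prog)"

text \<open>A sequential MTTKRP algorithm (straight-line program) for mode n: runs from
inputs in slow memory with empty fast memory, performs each iteration-space multiply
exactly once, and ends with every output entry B(i,r) in slow memory as a binary
addition tree whose leaves are exactly the products of its fibre.\<close>
definition mttkrp_alg :: "nat list \<Rightarrow> nat \<Rightarrow> nat \<Rightarrow> nat \<Rightarrow> instr list \<Rightarrow> bool" where
  "mttkrp_alg dims n R M prog \<longleftrightarrow>
     (\<exists>S F. exec M prog (inputs dims n R, {}) = Some (S, F) \<and>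
        (\<forall>idx r. valid_idx dims idx \<and> r < R \<longrightarrow>
            length (filter (\<lambda>x. x = MulOp (prod_args dims n idx r)) prog) = 1) \<and>
        (\<forall>i r. i < dims ! n \<and> r < R \<longrightarrow>
            (\<exists>t\<in>S. leaves t = mset_set (products dims n i r))))"

end

theory Submission
  imports Defs "HOL-Analysis.Convex"
begin

text \<open>Cut the execution into segments containing M loads and stores each (the last one possibly
  fewer), so there are at most io/M + 1 segments. The operands of the multiplies performed in a
  segment are in fast memory at its start or loaded during it. Since no algebraic laws hold, a
  product reaches its output entry only through partial sums of that entry, one of which must be
  in fast memory at the end of the segment or stored during it, and different output entries have
  different partial sums. Hence the tensor entries, factor-matrix entries and output entries
  touched by one segment number at most 3M altogether. For a fixed column r the multiplies of a
  segment form a set of N-tuples inside the product of its coordinate projections, and AM-GM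
  bounds their number, giving at most (3M)^(2-1/N)/N multiplies per segment. Summing over the
  segments, IR <= (io/M + 1) (3M)^(2-1/N)/N, which rearranges to the claim.\<close>

section \<open>Counting tuples by their projections\<close>

lemma card_eq_sum_card_fibres:
  assumes "finite T"
  shows "card T = (\<Sum>b\<in>snd ` T. card {a. (a, b) \<in> T})"
proof -
  have "card T = (\<Sum>b\<in>snd ` T. card {x \<in> T. snd x = b})"
    using sum.group[of T "snd ` T" snd "\<lambda>_. 1::nat"] assms by simp
  also have "\<dots> = (\<Sum>b\<in>snd ` T. card {a. (a, b) \<in> T})"
  proof (rule sum.cong[OF refl])
    fix b
    have "{x \<in> T. snd x = b} = (\<lambda>a. (a, b)) ` {a. (a, b) \<in> T}"
      by (auto simp: image_iff)
    then show "card {x \<in> T. snd x = b} = card {a. (a, b) \<in> T}"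
      by (simp add: card_image inj_on_def)
  qed
  finally show ?thesis .
qed

lemma card_lists_le_prod_card:
  assumes "\<And>k. k < N \<Longrightarrow> finite (P k)"
    and "S \<subseteq> {xs. length xs = N \<and> (\<forall>k<N. xs ! k \<in> P k)}"
  shows "card S \<le> (\<Prod>k<N. card (P k))"
proof -
  let ?f = "\<lambda>xs. \<lambda>k\<in>{..<N}. xs ! k"
  have "inj_on ?f S"
  proof
    fix xs ys assume "xs \<in> S" "ys \<in> S" and eq: "?f xs = ?f ys"
    then have "length xs = N" "length ys = N" using assms(2) by auto
    moreover have "xs ! k = ys ! k" if "k < N" for k
      using fun_cong[OF eq, of k] that by simp
    ultimately show "xs = ys" by (simp add: nth_equalityI)
  qed
  then have "card S = card (?f ` S)" by (simp add: card_image)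
  also have "\<dots> \<le> card (\<Pi>\<^sub>E k\<in>{..<N}. P k)"
  proof (rule card_mono)
    show "finite (\<Pi>\<^sub>E k\<in>{..<N}. P k)" using assms(1) by (intro finite_PiE) auto
    show "?f ` S \<subseteq> (\<Pi>\<^sub>E k\<in>{..<N}. P k)"
      using assms(2) restrict_PiE_iff[of "(!) _" "{..<N}" P] by blast
  qed
  also have "\<dots> = (\<Prod>k<N. card (P k))" by (simp add: card_PiE)
  finally show ?thesis .
qed

text \<open>For a set of N-tuples, write its size as s = s^(1-1/N) s^(1/N), bound the first factor
  by x and the second by the geometric, hence arithmetic, mean of the coordinate projections.\<close>
lemma card_le_powr_mean_card_nth_image:
  fixes S :: "'a list set"
  assumes "finite S" and len: "\<And>xs. xs \<in> S \<Longrightarrow> length xs = N" and "N \<ge> 1" and "card S \<le> x"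
  shows "real (card S) \<le> real x powr (1 - 1 / real N) * (\<Sum>k<N. real (card ((\<lambda>xs. xs ! k) ` S))) / real N"
proof (cases "S = {}")
  case True
  then show ?thesis by simp
next
  case False
  let ?s = "real (card S)" and ?e = "1 / real N"
  let ?p = "\<Prod>k<N. real (card ((\<lambda>xs. xs ! k) ` S))"
  have e: "0 \<le> ?e" "?e \<le> 1" using \<open>N \<ge> 1\<close> by auto
  have "card S \<le> (\<Prod>k<N. card ((\<lambda>xs. xs ! k) ` S))"
    using assms by (intro card_lists_le_prod_card) auto
  then have sp: "?s \<le> ?p" by (metis of_nat_le_iff of_nat_prod)
  have "?s = ?s powr (1 - ?e) * ?s powr ?e"
    using False \<open>finite S\<close> by (simp add: powr_add[symmetric])
  also have "\<dots> \<le> real x powr (1 - ?e) * ?p powr ?e"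
    using e sp \<open>card S \<le> x\<close> by (intro mult_mono powr_mono2) auto
  also have "?p powr ?e \<le> (\<Sum>k<N. real (card ((\<lambda>xs. xs ! k) ` S)) / real N)"
    using arith_geom_mean[of "{..<N}" "\<lambda>k. real (card ((\<lambda>xs. xs ! k) ` S))"] \<open>N \<ge> 1\<close>
    by (simp add: lessThan_empty_iff)
  finally show ?thesis
    by (simp add: mult_left_mono sum_divide_distrib[symmetric])
qed

definition index_proj :: "nat \<Rightarrow> 'a list \<times> 'b \<Rightarrow> 'a \<times> 'b" where
  "index_proj k q = (fst q ! k, snd q)"

lemma card_le_powr_mean_card_index_proj:
  fixes Q :: "('a list \<times> 'b) set"
  assumes "finite Q" and len: "\<And>q. q \<in> Q \<Longrightarrow> length (fst q) = N" and "N \<ge> 1"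
  shows "real (card Q) \<le>
    real (card (fst ` Q)) powr (1 - 1 / real N) * (\<Sum>k<N. real (card (index_proj k ` Q))) / real N"
proof -
  define x where "x = card (fst ` Q)"
  define S where "S r = {xs. (xs, r) \<in> Q}" for r
  have S_sub: "S r \<subseteq> fst ` Q" for r
    unfolding S_def by (auto intro: rev_image_eqI)
  have S_proj: "(\<lambda>xs. xs ! k) ` S r = {i. (i, r) \<in> index_proj k ` Q}" for k r
    unfolding S_def by (auto simp: index_proj_def image_iff intro: bexI[where x = "(_, r)"])
  have snd_proj: "snd ` index_proj k ` Q = snd ` Q" for k
    by (simp add: image_image index_proj_def)
  have "real (card Q) = (\<Sum>r\<in>snd ` Q. real (card (S r)))"
    using card_eq_sum_card_fibres[OF \<open>finite Q\<close>] by (simp add: S_def)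
  also have "\<dots> \<le> (\<Sum>r\<in>snd ` Q. real x powr (1 - 1 / real N) *
      (\<Sum>k<N. real (card ((\<lambda>xs. xs ! k) ` S r))) / real N)"
  proof (rule sum_mono, rule card_le_powr_mean_card_nth_image)
    show "finite (S r)" "card (S r) \<le> x" for r
      using S_sub[of r] \<open>finite Q\<close> unfolding x_def by (auto intro: finite_subset card_mono)
  qed (use len \<open>N \<ge> 1\<close> in \<open>auto simp: S_def\<close>)
  also have "\<dots> = real x powr (1 - 1 / real N) *
      (\<Sum>k<N. \<Sum>r\<in>snd ` index_proj k ` Q. real (card {i. (i, r) \<in> index_proj k ` Q})) / real N"
    unfolding S_proj snd_proj
    by (simp add: sum_distrib_left sum_divide_distrib[symmetric] sum.swap[of _ "snd ` Q"])
  also have "\<dots> = real x powr (1 - 1 / real N) * (\<Sum>k<N. real (card (index_proj k ` Q))) / real N"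
    using \<open>finite Q\<close> by (simp add: card_eq_sum_card_fibres[of "index_proj _ ` Q"])
  finally show ?thesis by (simp add: x_def)
qed

section \<open>Executions in the two-level memory\<close>

lemma exec_append:
  "exec M (xs @ ys) s = (case exec M xs s of None \<Rightarrow> None | Some s' \<Rightarrow> exec M ys s')"
  by (induction xs arbitrary: s) (auto split: option.splits)

fun add_subterms :: "val \<Rightarrow> val set" where
  "add_subterms (Add a b) = insert (Add a b) (add_subterms a \<union> add_subterms b)"
| "add_subterms v = {v}"

lemma self_in_add_subterms: "t \<in> add_subterms t"
  by (cases t) auto

lemma set_leaves_add_subterm: "v \<in> add_subterms t \<Longrightarrow> set_mset (leaves v) \<subseteq> set_mset (leaves t)"
  by (induction t) auto

lemma leaves_nonempty: "leaves v \<noteq> {#}"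
  by (induction v rule: leaves.induct) auto

fun transferred :: "instr \<Rightarrow> val set" where
  "transferred (Load v) = {v}"
| "transferred (Store v) = {v}"
| "transferred _ = {}"

lemma card_transferred: "card (transferred i) = (if is_io i then 1 else 0)"
  by (cases i) auto

locale program_run =
  fixes M :: nat and prog :: "instr list" and S0 :: "val set"
  assumes runs: "exec M prog (S0, {}) \<noteq> None"
begin

definition state :: "nat \<Rightarrow> val set \<times> val set" where
  "state j = the (exec M (take j prog) (S0, {}))"

definition slow :: "nat \<Rightarrow> val set" where
  "slow j = fst (state j)"

definition fast :: "nat \<Rightarrow> val set" where
  "fast j = snd (state j)"

lemma exec_take:
  assumes "j \<le> length prog"
  shows "exec M (take j prog) (S0, {}) = Some (slow j, fast j)"
proof -
  have "exec M prog (S0, {}) =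
      (case exec M (take j prog) (S0, {}) of None \<Rightarrow> None | Some s \<Rightarrow> exec M (drop j prog) s)"
    by (metis append_take_drop_id exec_append)
  then have "exec M (take j prog) (S0, {}) \<noteq> None"
    using runs by (auto split: option.splits)
  then show ?thesis by (auto simp: state_def slow_def fast_def)
qed

lemma exec_eq_final_state: "exec M prog (S0, {}) = Some (slow (length prog), fast (length prog))"
  using exec_take[of "length prog"] by simp

lemma slow_0: "slow 0 = S0" and fast_0: "fast 0 = {}"
  using exec_take[of 0] by simp_all

lemma step_state:
  assumes "j < length prog"
  shows "step M (prog ! j) (slow j, fast j) = Some (slow (Suc j), fast (Suc j))"
  using exec_take[of j] exec_take[of "Suc j"] assms
  by (simp add: take_Suc_conv_app_nth exec_append split: option.splits)

lemma fast_Suc_cases: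
  assumes "j < length prog" "v \<in> fast (Suc j)"
  shows "v \<in> fast j \<or> prog ! j = Load v \<and> v \<in> slow j \<or> (\<exists>ts. prog ! j = MulOp ts \<and> v = Mul ts)
    \<or> (\<exists>x y. prog ! j = AddOp x y \<and> v = Add x y \<and> x \<in> fast j \<and> y \<in> fast j)"
  using step_state[OF assms(1), symmetric] assms(2) by (cases "prog ! j") (auto split: if_splits)

lemma slow_Suc_cases:
  assumes "j < length prog" "v \<in> slow (Suc j)"
  shows "v \<in> slow j \<or> prog ! j = Store v \<and> v \<in> fast j"
  using step_state[OF assms(1), symmetric] assms(2) by (cases "prog ! j") (auto split: if_splits)

lemma operands_in_fast:
  assumes "j < length prog" "prog ! j = MulOp ts"
  shows "set ts \<subseteq> fast j"
  using step_state[OF assms(1), symmetric] assms(2) by (auto split: if_splits)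

lemma fast_bounded:
  assumes "j \<le> length prog"
  shows "finite (fast j) \<and> card (fast j) \<le> M"
  using assms
proof (induction j)
  case 0
  then show ?case by (simp add: fast_0)
next
  case (Suc j)
  then have "finite (fast j)" "card (fast j) \<le> M" and j: "j < length prog" by auto
  with step_state[OF j, symmetric] show ?case
    by (cases "prog ! j") (auto split: if_splits intro: le_trans[OF card_Diff1_le])
qed

lemma input_in_fast_loaded:
  assumes "a \<le> j" "j \<le> length prog" "Inp x \<in> fast j"
  shows "Inp x \<in> fast a \<or> (\<exists>i\<in>{a..<j}. prog ! i = Load (Inp x))"
  using assms
proof (induction j rule: dec_induct)
  case (step j)
  then show ?case using fast_Suc_cases[of j "Inp x"] by (auto simp: less_Suc_eq)
qed simp

lemma in_slow_stored:
  assumes "a \<le> j" "j \<le> length prog" "v \<in> slow j"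
  shows "v \<in> slow a \<or> (\<exists>i\<in>{a..<j}. prog ! i = Store v)"
  using assms
proof (induction j rule: dec_induct)
  case (step j)
  then show ?case using slow_Suc_cases[of j v] by (auto simp: less_Suc_eq)
qed simp

text \<open>Only AddOp builds a new value out of old ones, so a product that has not been recomputed
  since time b and is a leaf of a value in memory descends from an addition-subterm of that value
  which was already in memory at time b.\<close>
lemma product_leaf_ancestor:
  assumes "b \<le> j" "j \<le> length prog" "v \<in> slow j \<union> fast j" "Mul ts \<in># leaves v"
    and "\<forall>i\<in>{b..<j}. prog ! i \<noteq> MulOp ts"
  shows "\<exists>w\<in>add_subterms v. w \<in> slow b \<union> fast b \<and> Mul ts \<in># leaves w"
  using assms
proof (induction j arbitrary: v rule: dec_induct)
  case base
  then show ?case using self_in_add_subterms by blast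
next
  case (step j)
  have j: "j < length prog" and fresh: "prog ! j \<noteq> MulOp ts"
    using step by auto
  have "v \<in> slow j \<union> fast j \<or> (\<exists>x y. v = Add x y \<and> x \<in> fast j \<and> y \<in> fast j)"
    using step.prems(2,3) fast_Suc_cases[OF j, of v] slow_Suc_cases[OF j, of v] fresh by fastforce
  then show ?case
  proof
    assume "v \<in> slow j \<union> fast j"
    then show ?thesis using step by auto
  next
    assume "\<exists>x y. v = Add x y \<and> x \<in> fast j \<and> y \<in> fast j"
    then obtain x y where v: "v = Add x y" and xy: "x \<in> fast j" "y \<in> fast j" by blast
    then obtain u where "u \<in> {x, y}" "Mul ts \<in># leaves u"
      using step.prems(3) by auto
    moreover have "add_subterms u \<subseteq> add_subterms v"
      using \<open>u \<in> {x, y}\<close> v by auto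
    ultimately show ?thesis using step xy by fastforce
  qed
qed

definition io_before :: "nat \<Rightarrow> nat" where
  "io_before j = card {i. i < j \<and> is_io (prog ! i)}"

definition io_vals :: "nat \<Rightarrow> nat \<Rightarrow> val set" where
  "io_vals a b = (\<Union>i\<in>{a..<b}. transferred (prog ! i))"

lemma io_valsI: "i \<in> {a..<b} \<Longrightarrow> v \<in> transferred (prog ! i) \<Longrightarrow> v \<in> io_vals a b"
  unfolding io_vals_def by blast

lemma io_count_eq_io_before: "io_count prog = io_before (length prog)"
  by (simp add: io_count_def io_before_def length_filter_conv_card)

lemma io_before_mono: "i \<le> j \<Longrightarrow> io_before i \<le> io_before j"
  unfolding io_before_def by (rule card_mono) auto

lemma io_before_Suc: "\<not> is_io (prog ! j) \<Longrightarrow> io_before (Suc j) = io_before j"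
  unfolding io_before_def by (metis less_Suc_eq)

lemma finite_io_vals: "finite (io_vals a b)"
proof -
  have "finite (transferred i)" for i by (cases i) auto
  then show ?thesis by (simp add: io_vals_def)
qed

lemma card_io_vals_le:
  assumes "a \<le> b"
  shows "io_before a + card (io_vals a b) \<le> io_before b"
proof -
  let ?io = "\<lambda>A. {i \<in> A. is_io (prog ! i)}"
  have "card (io_vals a b) \<le> (\<Sum>i\<in>{a..<b}. card (transferred (prog ! i)))"
    unfolding io_vals_def by (rule card_UN_le) simp
  also have "\<dots> = card (?io {a..<b})"
    unfolding card_transferred
    using sum.inter_filter[of "{a..<b}" "\<lambda>_. 1::nat" "\<lambda>i. is_io (prog ! i)"] by simp
  finally have "io_before a + card (io_vals a b) \<le> card (?io {..<a}) + card (?io {a..<b})"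
    by (simp add: io_before_def)
  also have "\<dots> = card (?io {..<a} \<union> ?io {a..<b})"
    by (rule card_Un_disjoint[symmetric]) auto
  also have "?io {..<a} \<union> ?io {a..<b} = ?io {..<b}"
    using assms by auto
  finally show ?thesis by (simp add: io_before_def)
qed

end

section \<open>Executions of an MTTKRP algorithm\<close>

lemma valid_idx_Cons:
  "valid_idx (d # ds) xs \<longleftrightarrow> (\<exists>x ys. xs = x # ys \<and> x < d \<and> valid_idx ds ys)"
  by (cases xs) (auto simp: valid_idx_def All_less_Suc2)

lemma valid_idx_finite_card:
  "finite {xs. valid_idx dims xs} \<and> card {xs. valid_idx dims xs} = prod_list dims"
proof (induction dims)
  case Nil
  then show ?case by (simp add: valid_idx_def)
next
  case (Cons d ds)
  have "{xs. valid_idx (d # ds) xs} = (\<lambda>(x, ys). x # ys) ` ({..<d} \<times> {ys. valid_idx ds ys})"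
    by (auto simp: valid_idx_Cons)
  moreover have "inj_on (\<lambda>(x, ys). x # ys) ({..<d} \<times> {ys. valid_idx ds ys})"
    by (auto simp: inj_on_def)
  ultimately show ?case
    using Cons by (simp add: card_image card_cartesian_product)
qed

text \<open>With at least two modes some factor-matrix entry A(k)(i_k, r) is an operand, and it
  determines r.\<close>
lemma prod_args_inj:
  assumes "length dims \<ge> 2" "n < length dims"
    and "prod_args dims n idx r = prod_args dims n idx' r'"
  shows "idx = idx' \<and> r = r'"
proof -
  define k :: nat where "k = (if n = 0 then 1 else 0)"
  have "k < length dims" "k \<noteq> n" using assms(1) by (auto simp: k_def)
  then have "Inp (AIn k (idx ! k) r) \<in> set (prod_args dims n idx' r')"
    using assms(3)[symmetric] by (auto simp: prod_args_def)
  then show ?thesis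
    using assms(3) by (auto simp: prod_args_def)
qed

lemma finite_products: "finite (products dims n i r)"
proof -
  have "products dims n i r \<subseteq> (\<lambda>idx. Mul (prod_args dims n idx r)) ` {idx. valid_idx dims idx}"
    by (auto simp: products_def)
  then show ?thesis using valid_idx_finite_card finite_subset by blast
qed

lemma products_disjoint:
  assumes "length dims \<ge> 2" "n < length dims"
    and "e \<in> products dims n i r" "e \<in> products dims n i' r'"
  shows "i = i' \<and> r = r'"
  using assms prod_args_inj[OF assms(1,2)] by (auto simp: products_def)

definition segment_mul_bound :: "nat \<Rightarrow> nat \<Rightarrow> real" where
  "segment_mul_bound M N = (3 * real M) powr (1 - 1 / real N) * (3 * real M) / real N"

lemma segment_mul_bound_eq:
  assumes "N \<ge> 1"
  shows "segment_mul_bound M N = 3 powr (2 - 1 / real N) * real M powr (1 - 1 / real N) * real M / real N"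
proof -
  have "3 powr (2 - 1 / real N) = 3 * 3 powr (1 - 1 / real N)"
    using powr_add[of 3 1 "1 - 1 / real N"] by simp
  then show ?thesis
    by (simp add: segment_mul_bound_def powr_mult)
qed

lemma io_ge_of_le_segments:
  fixes P io :: real
  assumes "M > 0" "N \<ge> 1" and P: "P \<le> (io / real M + 1) * segment_mul_bound M N"
  shows "io \<ge> 1 / 3 powr (2 - 1 / real N) * (real N * P) / real M powr (1 - 1 / real N) - real M"
proof -
  let ?G = "segment_mul_bound M N"
  have "?G > 0"
    using assms by (simp add: segment_mul_bound_def)
  then have "real M * (P / ?G) \<le> real M * (io / real M + 1)"
    using P \<open>M > 0\<close> by (intro mult_left_mono) (simp_all add: pos_divide_le_eq)
  also have "\<dots> = io + real M"
    using \<open>M > 0\<close> by (simp add: field_simps)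
  also have "real M * (P / ?G) = 1 / 3 powr (2 - 1 / real N) * (real N * P) / real M powr (1 - 1 / real N)"
    using assms by (simp add: segment_mul_bound_eq field_simps)
  finally show ?thesis by simp
qed

locale mttkrp_run =
  fixes dims :: "nat list" and n R M :: nat and prog :: "instr list"
  assumes two_modes: "length dims \<ge> 2" and mode: "n < length dims"
    and alg: "mttkrp_alg dims n R M prog"

sublocale mttkrp_run \<subseteq> program_run M prog "inputs dims n R"
  using alg by unfold_locales (auto simp: mttkrp_alg_def)

context mttkrp_run
begin

definition iter_points :: "(nat list \<times> nat) set" where
  "iter_points = {idx. valid_idx dims idx} \<times> {..<R}"

definition mul_args :: "nat list \<times> nat \<Rightarrow> val list" where
  "mul_args q = prod_args dims n (fst q) (snd q)"

definition mul_time :: "nat list \<times> nat \<Rightarrow> nat" where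
  "mul_time q = (THE j. j < length prog \<and> prog ! j = MulOp (mul_args q))"

definition output_tree :: "nat \<times> nat \<Rightarrow> val" where
  "output_tree f =
    (SOME t. t \<in> slow (length prog) \<and> leaves t = mset_set (products dims n (fst f) (snd f)))"

definition muls_between :: "nat \<Rightarrow> nat \<Rightarrow> (nat list \<times> nat) set" where
  "muls_between a b = {q \<in> iter_points. a \<le> mul_time q \<and> mul_time q < b}"

definition segment_muls :: "nat \<Rightarrow> (nat list \<times> nat) set" where
  "segment_muls c = {q \<in> iter_points. io_before (mul_time q) div M = c}"

definition partial_sum :: "nat \<Rightarrow> nat \<Rightarrow> nat \<times> nat \<Rightarrow> val" where
  "partial_sum a b f = (SOME v. v \<in> fast b \<union> io_vals a b \<and> v \<in> add_subterms (output_tree f))"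

lemma finite_iter_points: "finite iter_points"
  and card_iter_points: "card iter_points = prod_list dims * R"
  using valid_idx_finite_card[of dims] by (auto simp: iter_points_def card_cartesian_product)

lemma finite_muls_between: "finite (muls_between a b)"
  using finite_iter_points by (simp add: muls_between_def)

lemma mul_time:
  assumes "q \<in> iter_points"
  shows "mul_time q < length prog" "prog ! mul_time q = MulOp (mul_args q)"
    and "\<And>j. j < length prog \<Longrightarrow> prog ! j = MulOp (mul_args q) \<Longrightarrow> j = mul_time q"
proof -
  have "length (filter (\<lambda>x. x = MulOp (mul_args q)) prog) = 1"
    using alg assms unfolding mttkrp_alg_def iter_points_def mul_args_def by (cases q) auto
  then have "card {j. j < length prog \<and> prog ! j = MulOp (mul_args q)} = 1"
    by (simp add: length_filter_conv_card)
  then obtain j where j: "{j. j < length prog \<and> prog ! j = MulOp (mul_args q)} = {j}"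
    by (auto simp: card_Suc_eq)
  then have "mul_time q = j"
    unfolding mul_time_def by (rule_tac the_equality) auto
  then show "mul_time q < length prog" "prog ! mul_time q = MulOp (mul_args q)"
    and "\<And>j. j < length prog \<Longrightarrow> prog ! j = MulOp (mul_args q) \<Longrightarrow> j = mul_time q"
    using j by auto
qed

lemma mul_in_products:
  assumes "q \<in> iter_points"
  shows "Mul (mul_args q) \<in> products dims n (fst q ! n) (snd q)"
  using assms by (auto simp: iter_points_def mul_args_def products_def)

lemma output_tree:
  assumes "q \<in> iter_points"
  shows "output_tree (index_proj n q) \<in> slow (length prog)"
    and "set_mset (leaves (output_tree (index_proj n q))) = products dims n (fst q ! n) (snd q)"
proof -
  obtain S F where "exec M prog (inputs dims n R, {}) = Some (S, F)"
    and out: "\<forall>i r. i < dims ! n \<and> r < R \<longrightarrow> (\<exists>t\<in>S. leaves t = mset_set (products dims n i r))"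
    using alg unfolding mttkrp_alg_def by blast
  then have "S = slow (length prog)"
    using exec_eq_final_state by simp
  moreover have "fst q ! n < dims ! n" "snd q < R"
    using assms mode by (auto simp: iter_points_def valid_idx_def)
  ultimately have "\<exists>t. t \<in> slow (length prog) \<and> leaves t = mset_set (products dims n (fst q ! n) (snd q))"
    using out by blast
  then have "output_tree (index_proj n q) \<in> slow (length prog) \<and>
      leaves (output_tree (index_proj n q)) = mset_set (products dims n (fst q ! n) (snd q))"
    unfolding output_tree_def index_proj_def fst_conv snd_conv by (rule someI_ex)
  then show "output_tree (index_proj n q) \<in> slow (length prog)"
    and "set_mset (leaves (output_tree (index_proj n q))) = products dims n (fst q ! n) (snd q)"
    using finite_products by auto
qed

lemma product_leaf_computed:
  assumes "j \<le> length prog" "v \<in> slow j \<union> fast j" "Mul ts \<in># leaves v"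
  shows "\<exists>i<j. prog ! i = MulOp ts"
proof (rule ccontr)
  assume "\<not> ?thesis"
  then have "\<forall>i\<in>{0..<j}. prog ! i \<noteq> MulOp ts" by auto
  then obtain w where "w \<in> slow 0 \<union> fast 0" "Mul ts \<in># leaves w"
    using product_leaf_ancestor[OF le0 assms] by blast
  moreover have "slow 0 \<union> fast 0 = inputs dims n R"
    by (simp add: slow_0 fast_0)
  ultimately have "Mul ts \<in># leaves w" "w \<in> inputs dims n R" by auto
  then show False by (auto simp: inputs_def)
qed

lemma operands_available:
  assumes "q \<in> muls_between a b"
  shows "set (mul_args q) \<subseteq> fast a \<union> io_vals a b"
proof
  fix v assume v: "v \<in> set (mul_args q)"
  have q: "q \<in> iter_points" "a \<le> mul_time q" "mul_time q < b"
    using assms by (auto simp: muls_between_def)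
  obtain x where x: "v = Inp x"
    using v by (auto simp: mul_args_def prod_args_def)
  have "v \<in> fast (mul_time q)"
    using operands_in_fast[OF mul_time(1,2)[OF q(1)]] v by blast
  then have "v \<in> fast a \<or> (\<exists>i\<in>{a..<mul_time q}. prog ! i = Load v)"
    using input_in_fast_loaded[OF q(2) less_imp_le[OF mul_time(1)[OF q(1)]]] x by simp
  then show "v \<in> fast a \<union> io_vals a b"
    using q(3) io_valsI[of _ a b v] by fastforce
qed

text \<open>The product computed at time t, a <= t < b, is a leaf of its output tree at the end.
  Tracing it back to time b gives a partial sum in memory; it cannot have sat in slow memory
  since time a (its leaf did not exist yet), so it was in fast memory or stored meanwhile.\<close>
lemma partial_sum_exists:
  assumes "q \<in> muls_between a b" and b: "b \<le> length prog"
  shows "\<exists>v. v \<in> fast b \<union> io_vals a b \<and> v \<in> add_subterms (output_tree (index_proj n q))"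
proof -
  let ?t = "output_tree (index_proj n q)" and ?ts = "mul_args q"
  have q: "q \<in> iter_points" "a \<le> mul_time q" "mul_time q < b"
    using assms(1) by (auto simp: muls_between_def)
  have once: "i = mul_time q" if "i < length prog" "prog ! i = MulOp ?ts" for i
    using mul_time(3)[OF q(1) that] .
  have "Mul ?ts \<in># leaves ?t"
    using output_tree(2)[OF q(1)] mul_in_products[OF q(1)] by simp
  moreover have "\<forall>i\<in>{b..<length prog}. prog ! i \<noteq> MulOp ?ts"
    using once q(3) by fastforce
  ultimately obtain w where w: "w \<in> add_subterms ?t" "w \<in> slow b \<union> fast b" "Mul ?ts \<in># leaves w"
    using product_leaf_ancestor[OF b order_refl UnI1[OF output_tree(1)[OF q(1)]]] by auto
  have "w \<notin> slow a"
  proof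
    assume "w \<in> slow a"
    then obtain i where "i < a" "prog ! i = MulOp ?ts"
      using product_leaf_computed[of a w] w(3) q b by auto
    moreover from this have "i = mul_time q"
      using once q b by simp
    ultimately show False
      using q(2) by simp
  qed
  then have "w \<in> fast b \<union> io_vals a b"
    using w(2) in_slow_stored[of a b w] q b io_valsI[of _ a b w] by fastforce
  then show ?thesis using w(1) by blast
qed

lemma partial_sum:
  assumes "q \<in> muls_between a b" "b \<le> length prog"
  shows "partial_sum a b (index_proj n q) \<in> fast b \<union> io_vals a b"
    and "set_mset (leaves (partial_sum a b (index_proj n q))) \<subseteq> products dims n (fst q ! n) (snd q)"
proof -
  have q: "q \<in> iter_points" using assms(1) by (simp add: muls_between_def)
  have "partial_sum a b (index_proj n q) \<in> fast b \<union> io_vals a b \<and>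
      partial_sum a b (index_proj n q) \<in> add_subterms (output_tree (index_proj n q))"
    unfolding partial_sum_def by (rule someI_ex) (rule partial_sum_exists[OF assms])
  then show "partial_sum a b (index_proj n q) \<in> fast b \<union> io_vals a b"
    and "set_mset (leaves (partial_sum a b (index_proj n q))) \<subseteq> products dims n (fst q ! n) (snd q)"
    using set_leaves_add_subterm output_tree(2)[OF q] by auto
qed

lemma inj_on_partial_sum:
  assumes "b \<le> length prog"
  shows "inj_on (partial_sum a b) (index_proj n ` muls_between a b)"
proof
  fix f g assume "f \<in> index_proj n ` muls_between a b" "g \<in> index_proj n ` muls_between a b"
    and eq: "partial_sum a b f = partial_sum a b g"
  then obtain q q' where q: "q \<in> muls_between a b" "f = index_proj n q"
    and q': "q' \<in> muls_between a b" "g = index_proj n q'"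
    by blast
  obtain e where "e \<in># leaves (partial_sum a b f)"
    using leaves_nonempty by (metis multiset_nonemptyE)
  then have "e \<in> products dims n (fst q ! n) (snd q)" "e \<in> products dims n (fst q' ! n) (snd q')"
    using partial_sum(2)[OF q(1) assms] partial_sum(2)[OF q'(1) assms] q(2) q'(2) eq by auto
  then show "f = g"
    using products_disjoint[OF two_modes mode] q(2) q'(2) by (auto simp: index_proj_def)
qed

lemma set_mul_args:
  "set (mul_args q) = insert (Inp (XIn (fst q)))
     ((\<lambda>k. Inp (AIn k (fst q ! k) (snd q))) ` {k. k < length dims \<and> k \<noteq> n})"
  by (auto simp: mul_args_def prod_args_def)

lemma card_operands:
  assumes "finite Q"
  shows "card (\<Union>q\<in>Q. set (mul_args q)) =
    card (fst ` Q) + (\<Sum>k | k < length dims \<and> k \<noteq> n. card (index_proj k ` Q))"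
proof -
  let ?K = "{k. k < length dims \<and> k \<noteq> n}"
  let ?X = "(\<lambda>idx. Inp (XIn idx)) ` fst ` Q"
  let ?A = "\<lambda>k. (\<lambda>q. Inp (AIn k (fst q ! k) (snd q))) ` Q"
  have "(\<Union>q\<in>Q. set (mul_args q)) = ?X \<union> (\<Union>k\<in>?K. ?A k)"
    unfolding set_mul_args by auto
  moreover have "card ?X = card (fst ` Q)"
    by (rule card_image) (auto simp: inj_on_def)
  moreover have "card (?A k) = card (index_proj k ` Q)" for k
  proof -
    have "?A k = (\<lambda>(i, r). Inp (AIn k i r)) ` index_proj k ` Q"
      by (simp add: image_image index_proj_def)
    moreover have "inj (\<lambda>(i, r). Inp (AIn k i r))"
      by (auto simp: inj_def)
    ultimately show ?thesis
      by (simp add: card_image inj_on_subset)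
  qed
  moreover have "card (\<Union>k\<in>?K. ?A k) = (\<Sum>k\<in>?K. card (?A k))"
    using assms by (intro card_UN_disjoint) auto
  moreover have "?X \<inter> (\<Union>k\<in>?K. ?A k) = {}"
    by auto
  ultimately show ?thesis
    using assms by (simp add: card_Un_disjoint)
qed

lemma segment_footprint:
  assumes "a \<le> b" "b \<le> length prog" "io_before b \<le> io_before a + M"
  shows "card (fst ` muls_between a b) + (\<Sum>k<length dims. card (index_proj k ` muls_between a b))
    \<le> 3 * M"
proof -
  let ?Q = "muls_between a b" and ?K = "{k. k < length dims \<and> k \<noteq> n}"
  define ops where "ops = (\<Union>q\<in>?Q. set (mul_args q))"
  define partials where "partials = partial_sum a b ` index_proj n ` ?Q"
  have ops: "ops \<subseteq> fast a \<union> io_vals a b"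
    using operands_available unfolding ops_def by blast
  have partials: "partials \<subseteq> fast b \<union> io_vals a b"
    using partial_sum(1)[OF _ assms(2)] unfolding partials_def by blast
  have "v \<notin> partials" if "v \<in> ops" for v
  proof
    assume "v \<in> partials"
    then obtain q where "q \<in> ?Q" "v = partial_sum a b (index_proj n q)"
      unfolding partials_def by blast
    then have "set_mset (leaves v) \<subseteq> products dims n (fst q ! n) (snd q)"
      using partial_sum(2)[OF _ assms(2)] by blast
    moreover obtain x where "v = Inp x"
      using \<open>v \<in> ops\<close> by (auto simp: ops_def set_mul_args)
    ultimately show False
      by (auto simp: products_def)
  qed
  then have disjoint: "ops \<inter> partials = {}" by blast
  have fast: "finite (fast a)" "card (fast a) \<le> M" "finite (fast b)" "card (fast b) \<le> M"
    using fast_bounded[of a] fast_bounded[of b] assms by auto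
  have "card ops + card partials = card (ops \<union> partials)"
    using disjoint ops partials fast finite_io_vals
    by (intro card_Un_disjoint[symmetric]) (auto intro: finite_subset)
  also have "\<dots> \<le> card (fast a \<union> fast b \<union> io_vals a b)"
    using ops partials fast finite_io_vals by (intro card_mono) auto
  also have "\<dots> \<le> card (fast a) + card (fast b) + card (io_vals a b)"
    by (meson card_Un_le le_trans add_le_mono order_refl)
  also have "\<dots> \<le> 3 * M"
    using fast card_io_vals_le[OF assms(1)] assms(3) by simp
  finally have "card ops + card partials \<le> 3 * M" .
  moreover have "card ops = card (fst ` ?Q) + (\<Sum>k\<in>?K. card (index_proj k ` ?Q))"
    unfolding ops_def using finite_muls_between by (rule card_operands)
  moreover have "card partials = card (index_proj n ` ?Q)"
    unfolding partials_def using inj_on_partial_sum[OF assms(2)] by (rule card_image)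
  moreover have "(\<Sum>k<length dims. card (index_proj k ` ?Q)) =
      card (index_proj n ` ?Q) + (\<Sum>k\<in>?K. card (index_proj k ` ?Q))"
  proof -
    have "{..<length dims} = insert n ?K" using mode by auto
    then show ?thesis by simp
  qed
  ultimately show ?thesis by linarith
qed

lemma card_muls_between_le:
  assumes "a \<le> b" "b \<le> length prog" "io_before b \<le> io_before a + M"
  shows "real (card (muls_between a b)) \<le> segment_mul_bound M (length dims)"
proof -
  let ?Q = "muls_between a b" and ?N = "length dims" and ?e = "1 - 1 / real (length dims)"
  let ?x = "card (fst ` ?Q)" and ?S = "\<Sum>k<?N. real (card (index_proj k ` ?Q))"
  have "real (?x + (\<Sum>k<?N. card (index_proj k ` ?Q))) \<le> real (3 * M)"
    using segment_footprint[OF assms] by (simp only: of_nat_le_iff)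
  then have "real ?x + ?S \<le> 3 * real M" by simp
  moreover have "0 \<le> ?S" by (rule sum_nonneg) simp
  moreover have "0 \<le> ?e" using two_modes by (simp add: divide_le_eq_1)
  ultimately have "real ?x powr ?e * ?S \<le> (3 * real M) powr ?e * (3 * real M)"
    by (intro mult_mono powr_mono2) auto
  then have "real ?x powr ?e * ?S / real ?N \<le> segment_mul_bound M ?N"
    unfolding segment_mul_bound_def by (rule divide_right_mono) simp
  moreover have "real (card ?Q) \<le> real ?x powr ?e * ?S / real ?N"
    using finite_muls_between two_modes
    by (intro card_le_powr_mean_card_index_proj) (auto simp: muls_between_def iter_points_def valid_idx_def)
  ultimately show ?thesis by linarith
qed

lemma card_segment_muls_le:
  assumes "M > 0"
  shows "real (card (segment_muls c)) \<le> segment_mul_bound M (length dims)"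
proof (cases "segment_muls c = {}")
  case True
  show ?thesis unfolding True by (simp add: segment_mul_bound_def)
next
  case False
  let ?C = "segment_muls c"
  have fin: "finite (mul_time ` ?C)" "mul_time ` ?C \<noteq> {}"
    using finite_iter_points False by (auto simp: segment_muls_def)
  define a where "a = Min (mul_time ` ?C)"
  define m where "m = Max (mul_time ` ?C)"
  obtain qa qm where qa: "qa \<in> ?C" "a = mul_time qa" and qm: "qm \<in> ?C" "m = mul_time qm"
    using Min_in[OF fin] Max_in[OF fin] unfolding a_def m_def by blast
  have m: "m < length prog" "\<not> is_io (prog ! m)"
    using mul_time(1,2)[of qm] qm by (auto simp: segment_muls_def)
  have "io_before m div M = c" "io_before a div M = c"
    using qa qm by (auto simp: segment_muls_def)
  then have "io_before m < (c + 1) * M" "c * M \<le> io_before a"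
    using \<open>M > 0\<close> by (metis add.commute div_less_iff_less_mult less_add_one mult.commute,
        metis div_times_less_eq_dividend mult.commute)
  then have io: "io_before (Suc m) \<le> io_before a + M"
    using io_before_Suc[OF m(2)] by simp
  have "?C \<subseteq> muls_between a (Suc m)"
    using fin by (auto simp: segment_muls_def muls_between_def a_def m_def less_Suc_eq_le)
  then have "card ?C \<le> card (muls_between a (Suc m))"
    using finite_muls_between by (rule card_mono[rotated])
  also have "real \<dots> \<le> segment_mul_bound M (length dims)"
    using m io Min_le[OF fin(1) imageI[OF qm(1)]] qm(2)
    by (intro card_muls_between_le) (auto simp: a_def)
  finally show ?thesis by simp
qed

lemma card_iter_points_le:
  assumes "M > 0"
  shows "real (card iter_points) \<le> (real (io_count prog) / real M + 1) * segment_mul_bound M (length dims)"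
proof -
  let ?G = "segment_mul_bound M (length dims)" and ?c = "io_count prog div M"
  have "iter_points \<subseteq> (\<Union>c\<le>?c. segment_muls c)"
  proof
    fix q assume q: "q \<in> iter_points"
    have "io_before (mul_time q) \<le> io_count prog"
      using io_before_mono[of "mul_time q" "length prog"] mul_time(1)[OF q] io_count_eq_io_before
      by simp
    then have "io_before (mul_time q) div M \<le> ?c"
      by (rule div_le_mono)
    then show "q \<in> (\<Union>c\<le>?c. segment_muls c)"
      using q by (intro UN_I[of "io_before (mul_time q) div M"]) (auto simp: segment_muls_def)
  qed
  moreover have "finite (segment_muls c)" for c
    using finite_iter_points by (simp add: segment_muls_def)
  ultimately have "card iter_points \<le> card (\<Union>c\<le>?c. segment_muls c)"
    by (intro card_mono) auto
  also have "\<dots> \<le> (\<Sum>c\<le>?c. card (segment_muls c))"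
    by (rule card_UN_le) simp
  finally have "real (card iter_points) \<le> (\<Sum>c\<le>?c. real (card (segment_muls c)))"
    by (simp only: of_nat_sum[symmetric] of_nat_le_iff)
  also have "\<dots> \<le> (\<Sum>c\<le>?c. ?G)"
    by (rule sum_mono) (rule card_segment_muls_le[OF assms])
  also have "\<dots> = (real ?c + 1) * ?G"
    by simp
  also have "\<dots> \<le> (real (io_count prog) / real M + 1) * ?G"
    by (intro mult_right_mono) (auto simp: segment_mul_bound_def of_nat_div_le_of_nat)
  finally show ?thesis .
qed

end

theorem theorem1:
  fixes dims :: "nat list" and n R M :: nat and prog :: "instr list"
  assumes "length dims \<ge> 2"
    and "\<forall>k<length dims. dims ! k \<ge> 1"
    and "R \<ge> 1"
    and "n < length dims"
    and "mttkrp_alg dims n R M prog"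
  shows "real (io_count prog) \<ge>
           1 / 3 powr (2 - 1 / real (length dims)) *
           (real (length dims) * real (prod_list dims) * real R) /
           real M powr (1 - 1 / real (length dims)) - real M"
proof (cases "M = 0")
  case True
  \<comment> \<open>the right-hand side is then 0 by division by zero\<close>
  then show ?thesis by simp
next
  case False
  interpret mttkrp_run dims n R M prog
    using assms by unfold_locales
  have "real (prod_list dims) * real R \<le>
      (real (io_count prog) / real M + 1) * segment_mul_bound M (length dims)"
    using card_iter_points_le False by (simp add: card_iter_points)
  from io_ge_of_le_segments[OF _ _ this] show ?thesis
    using False assms(1) by (simp add: mult.assoc)
qed

end
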